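(* Let $a>0$, $0<\alpha<1$, let $m$ be the fixed positive integer of the standing setting, let $0<h\le a$ and let $g\in\mathcal C^m[0,h]$. Define $w(x):=\int_0^x(x-t)^{\alpha-1}g(t)\,dt$ for $0\le x\le h$. Then $w\in\mathcal C^{m,\alpha}[0,h]$ and \[ \|w'\|_{C^{m-1}[0,h]}\le Ch^\alpha\|g'\|_{C^{m-1}[0,h]},\qquad |w^{(m)}|_{C^{0,\alpha}[0,h]}\le C\|g^{(m)}\|_{C[0,h]}, \] where $C$ is a positive constant depending only on the standing data $\alpha$, $a$ and $M$ (in particular not on $h$ or $g$).
   Context: Standing setting: $a,b,M>0$, $0<\alpha<1$, $n$ a positive integer, $m:=\max\{j\in\mathbb N: j<n\alpha\}$, assumed $\ge1$. For integer $k\ge0$ and $0\le\gamma\le1$: $C^k[0,h]$ is the space of $k$ times continuously differentiable functions on $[0,h]$ with norm $\|v\|_{C^k[0,h]}=\max_{0\le j\le k}\max_{[0,h]}|v^{(j)}|$; $|v|_{C^{k,\gamma}[0,h]}:=\sup_{0\le x<y\le h}|v^{(k)}(x)-v^{(k)}(y)|/(y-x)^\gamma$; $C^{k,\gamma}[0,h]$ is the set of $v\in C^k[0,h]$ with finite seminorm, normed by $\max\{\|v\|_{C^k},|v|_{C^{k,\gamma}}\}$; $\mathcal C^{k,\gamma}[0,h]:=\{v\in C^{k,\gamma}[0,h]: v^{(j)}(0)=0,\ j=0,\dots,k\}$ and $\mathcal C^k[0,h]:=\mathcal C^{k,0}[0,h]$. *)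

theory Defs
  imports "HOL-Analysis.Analysis"
begin

definition mexp :: "nat \<Rightarrow> real \<Rightarrow> nat" where
  "mexp n \<alpha> = (GREATEST j::nat. real j < real n * \<alpha>)"

fun hderiv :: "nat \<Rightarrow> real set \<Rightarrow> (real \<Rightarrow> real) \<Rightarrow> real \<Rightarrow> real" where
  "hderiv 0 S f = f"
| "hderiv (Suc k) S f = (\<lambda>x. vector_derivative (hderiv k S f) (at x within S))"

definition Ck :: "nat \<Rightarrow> real \<Rightarrow> (real \<Rightarrow> real) \<Rightarrow> bool" where
  "Ck k h v \<longleftrightarrow>
     (\<forall>j<k. \<forall>x\<in>{0..h}.
        (hderiv j {0..h} v has_real_derivative hderiv (Suc j) {0..h} v x) (at x within {0..h})) \<and>
     (\<forall>j\<le>k. continuous_on {0..h} (hderiv j {0..h} v))"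

definition Ck_norm :: "nat \<Rightarrow> real \<Rightarrow> (real \<Rightarrow> real) \<Rightarrow> real" where
  "Ck_norm k h v = Max ((\<lambda>j. SUP x\<in>{0..h}. \<bar>hderiv j {0..h} v x\<bar>) ` {0..k})"

definition holder_quots :: "nat \<Rightarrow> real \<Rightarrow> real \<Rightarrow> (real \<Rightarrow> real) \<Rightarrow> real set" where
  "holder_quots k \<gamma> h v =
     (\<lambda>(x,y). \<bar>hderiv k {0..h} v x - hderiv k {0..h} v y\<bar> / (y - x) powr \<gamma>)
       ` {(x,y). 0 \<le> x \<and> x < y \<and> y \<le> h}"

definition holder_semi :: "nat \<Rightarrow> real \<Rightarrow> real \<Rightarrow> (real \<Rightarrow> real) \<Rightarrow> real" where
  "holder_semi k \<gamma> h v = Sup (holder_quots k \<gamma> h v)"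

definition Ckg :: "nat \<Rightarrow> real \<Rightarrow> real \<Rightarrow> (real \<Rightarrow> real) \<Rightarrow> bool" where
  "Ckg k \<gamma> h v \<longleftrightarrow> Ck k h v \<and> bdd_above (holder_quots k \<gamma> h v)"

text \<open>Calligraphic C^{k,gamma}[0,h]: additionally v^(j)(0) = 0 for j = 0..k.\<close>
definition cCkg :: "nat \<Rightarrow> real \<Rightarrow> real \<Rightarrow> (real \<Rightarrow> real) \<Rightarrow> bool" where
  "cCkg k \<gamma> h v \<longleftrightarrow> Ckg k \<gamma> h v \<and> (\<forall>j\<le>k. hderiv j {0..h} v 0 = 0)"

definition cCk :: "nat \<Rightarrow> real \<Rightarrow> (real \<Rightarrow> real) \<Rightarrow> bool" where
  "cCk k h v \<longleftrightarrow> cCkg k 0 h v"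

end

theory Submission
  imports Defs
begin

text \<open>Substituting \<open>s = x - t\<close> and extending \<open>g\<close> by zero to negative arguments writes
  \<open>w x\<close> as the integral of \<open>s powr (\<alpha> - 1) * g (x - s)\<close> over the window \<open>[0, h]\<close>, which no longer
  depends on \<open>x\<close>. Since the derivatives of \<open>g\<close> up to order \<open>m\<close> vanish at \<open>0\<close>, the zero extension of
  each of them is still continuously differentiable on \<open>[-h, h]\<close>; so one may differentiate under the
  integral sign, and the \<open>j\<close>-th derivative of \<open>w\<close> is the same fractional integral applied to the
  \<open>j\<close>-th derivative of \<open>g\<close>. The fractional integral of a function bounded by \<open>B\<close> is bounded by
  \<open>B h\<^sup>\<alpha> / \<alpha>\<close> and is H\<ouml>lder continuous of order \<open>\<alpha>\<close> with constant \<open>2 B / \<alpha>\<close>: split the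
  integral up to \<open>y\<close> at \<open>x\<close> and use that on \<open>[0, x)\<close> the kernel \<open>(x - t) powr (\<alpha> - 1)\<close> dominates
  \<open>(y - t) powr (\<alpha> - 1)\<close>. Both estimates therefore hold with \<open>C = 2 / \<alpha>\<close>.\<close>

text \<open>The Riemann--Liouville integral of order \<open>\<alpha>\<close> without the factor \<open>1/\<Gamma>(\<alpha>)\<close>.\<close>
definition riemann_liouville :: "real \<Rightarrow> (real \<Rightarrow> real) \<Rightarrow> real \<Rightarrow> real" where
  "riemann_liouville \<alpha> f x = integral {0..x} (\<lambda>t. (x - t) powr (\<alpha> - 1) * f t)"

definition zero_ext :: "(real \<Rightarrow> real) \<Rightarrow> real \<Rightarrow> real" where
  "zero_ext f t = (if t \<le> 0 then 0 else f t)"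

definition kernel_conv :: "real \<Rightarrow> real \<Rightarrow> (real \<Rightarrow> real) \<Rightarrow> real \<Rightarrow> real" where
  "kernel_conv \<alpha> h F x = integral {0..h} (\<lambda>s. s powr (\<alpha> - 1) * F (x - s))"

definition uniformly_differentiable_on :: "real set \<Rightarrow> (real \<Rightarrow> real) \<Rightarrow> (real \<Rightarrow> real) \<Rightarrow> bool" where
  "uniformly_differentiable_on A F F' \<longleftrightarrow>
     (\<forall>e>0. \<exists>d>0. \<forall>u\<in>A. \<forall>v\<in>A. \<bar>v - u\<bar> < d \<longrightarrow> \<bar>F v - F u - F' u * (v - u)\<bar> \<le> e * \<bar>v - u\<bar>)"

lemma riemann_liouville_0: "riemann_liouville \<alpha> f 0 = 0"
  by (simp add: riemann_liouville_def)

lemma has_integral_kernel: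
  fixes a b y \<alpha> :: real
  assumes "0 < \<alpha>" "a \<le> b" "b \<le> y"
  shows "((\<lambda>t. (y - t) powr (\<alpha> - 1)) has_integral ((y - a) powr \<alpha> - (y - b) powr \<alpha>) / \<alpha>) {a..b}"
proof -
  have "((\<lambda>t. (y - t) powr (\<alpha> - 1)) has_integral
          (\<lambda>t. - ((y - t) powr \<alpha>) / \<alpha>) b - (\<lambda>t. - ((y - t) powr \<alpha>) / \<alpha>) a) {a..b}"
  proof (rule fundamental_theorem_of_calculus_interior_strong[where S = "{}"])
    show "continuous_on {a..b} (\<lambda>t. - ((y - t) powr \<alpha>) / \<alpha>)"
      by (intro continuous_intros continuous_on_powr') (use assms in auto)
    fix t assume "t \<in> {a<..<b} - {}"
    then have "y - t > 0" using assms by auto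
    then have "((\<lambda>t. - ((y - t) powr \<alpha>) / \<alpha>) has_real_derivative (y - t) powr (\<alpha> - 1)) (at t)"
      using assms(1) by (auto intro!: derivative_eq_intros simp: powr_diff)
    then show "((\<lambda>t. - ((y - t) powr \<alpha>) / \<alpha>) has_vector_derivative (y - t) powr (\<alpha> - 1)) (at t)"
      by (simp add: has_real_derivative_iff_has_vector_derivative)
  qed (use assms in auto)
  then show ?thesis by (simp add: diff_divide_distrib)
qed

lemma has_integral_kernel_from_0:
  fixes h \<alpha> :: real
  assumes "0 < \<alpha>" "0 \<le> h"
  shows "((\<lambda>s. s powr (\<alpha> - 1)) has_integral h powr \<alpha> / \<alpha>) {0..h}"
  using has_integral_powr_from_0[of "\<alpha> - 1" h] assms by simp

lemma integrable_nonneg_kernel_mult: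
  fixes k f :: "real \<Rightarrow> real" and a b I :: real
  assumes "(k has_integral I) {a..b}" "\<And>t. t \<in> {a..b} \<Longrightarrow> 0 \<le> k t"
    and "continuous_on {a..b} f"
  shows "(\<lambda>t. k t * f t) integrable_on {a..b}"
proof -
  have S: "{a..b} \<in> sets lebesgue" by simp
  have "(\<lambda>t. f t * k t) absolutely_integrable_on {a..b}"
  proof (rule absolutely_integrable_bounded_measurable_product_real[OF _ S])
    show "f \<in> borel_measurable (lebesgue_on {a..b})"
      by (rule continuous_imp_measurable_on_sets_lebesgue[OF assms(3) S])
    show "bounded (f ` {a..b})"
      by (intro compact_imp_bounded compact_continuous_image assms(3)) simp
    show "k absolutely_integrable_on {a..b}"
      using assms(1,2) by (intro nonnegative_absolutely_integrable_1) (auto simp: has_integral_integrable)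
  qed
  then show ?thesis
    using set_lebesgue_integral_eq_integral(1) by (fastforce simp: mult.commute)
qed

lemma kernel_conv_has_integral:
  fixes F :: "real \<Rightarrow> real" and h x \<alpha> :: real
  assumes "0 < \<alpha>" "0 \<le> h" "continuous_on {-h..h} F" "x \<in> {0..h}"
  shows "((\<lambda>s. s powr (\<alpha> - 1) * F (x - s)) has_integral kernel_conv \<alpha> h F x) {0..h}"
  unfolding kernel_conv_def
proof (intro integrable_integral integrable_nonneg_kernel_mult[OF has_integral_kernel_from_0[OF assms(1,2)]])
  show "continuous_on {0..h} (\<lambda>s. F (x - s))"
    by (rule continuous_on_compose2[OF assms(3)]) (use assms(4) in \<open>auto intro!: continuous_intros\<close>)
qed simp

lemma uniformly_differentiable_on_interval:
  fixes G G' :: "real \<Rightarrow> real" and a b :: real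
  assumes "\<And>x. x \<in> {a..b} \<Longrightarrow> (G has_real_derivative G' x) (at x within {a..b})"
    and "continuous_on {a..b} G'"
  shows "uniformly_differentiable_on {a..b} G G'"
  unfolding uniformly_differentiable_on_def
proof (intro allI impI)
  fix e :: real assume "e > 0"
  moreover have "uniformly_continuous_on {a..b} G'"
    by (rule compact_uniformly_continuous[OF assms(2)]) simp
  ultimately obtain d where "d > 0" and d: "\<And>x x'. x \<in> {a..b} \<Longrightarrow> x' \<in> {a..b} \<Longrightarrow>
      dist x' x < d \<Longrightarrow> dist (G' x') (G' x) < e"
    unfolding uniformly_continuous_on_def by metis
  show "\<exists>d>0. \<forall>u\<in>{a..b}. \<forall>v\<in>{a..b}. \<bar>v - u\<bar> < d \<longrightarrow> \<bar>G v - G u - G' u * (v - u)\<bar> \<le> e * \<bar>v - u\<bar>"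
  proof (intro exI[of _ d] conjI ballI impI \<open>d > 0\<close>)
    fix u v assume u: "u \<in> {a..b}" and v: "v \<in> {a..b}" and uv: "\<bar>v - u\<bar> < d"
    define T where "T = {min u v..max u v}"
    have T: "T \<subseteq> {a..b}" using u v by (auto simp: T_def)
    have "norm ((G v - G' u * v) - (G u - G' u * u)) \<le> e * norm (v - u)"
    proof (rule field_differentiable_bound[of T])
      fix z assume z: "z \<in> T"
      then have "z \<in> {a..b}" using T by blast
      then have "(G has_real_derivative G' z) (at z within T)"
        by (rule DERIV_subset[OF assms(1) T])
      then show "((\<lambda>t. G t - G' u * t) has_field_derivative G' z - G' u) (at z within T)"
        by (auto intro!: derivative_eq_intros)
      have "\<bar>z - u\<bar> \<le> \<bar>v - u\<bar>" using z by (auto simp: T_def)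
      then show "norm (G' z - G' u) \<le> e"
        using d[OF u \<open>z \<in> {a..b}\<close>] uv by (simp add: dist_real_def)
    qed (auto simp: T_def)
    then show "\<bar>G v - G u - G' u * (v - u)\<bar> \<le> e * \<bar>v - u\<bar>" by (simp add: algebra_simps)
  qed
qed

lemma continuous_on_zero_ext:
  fixes G :: "real \<Rightarrow> real" and h :: real
  assumes "continuous_on {0..h} G" "G 0 = 0"
  shows "continuous_on {-h..h} (zero_ext G)"
proof -
  have "continuous_on {-h..h} (\<lambda>t. if t \<le> 0 then 0 else G t)"
    by (rule continuous_on_cases_le) (auto intro: continuous_on_subset[OF assms(1)] simp: assms(2))
  then show ?thesis by (simp add: zero_ext_def[abs_def])
qed

lemma has_real_derivative_zero_ext:
  fixes G G' :: "real \<Rightarrow> real" and h x :: real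
  assumes "\<And>t. t \<in> {0..h} \<Longrightarrow> (G has_real_derivative G' t) (at t within {0..h})"
    and "G 0 = 0" "G' 0 = 0" "x \<in> {-h..h}"
  shows "(zero_ext G has_real_derivative zero_ext G' x) (at x within {-h..h})"
proof -
  have h: "0 \<le> h" using assms(4) by simp
  have glue: "closure {-h..0} \<inter> closure {0..h} = {0::real}" using h by auto
  have left: "{-h..0} \<union> (closure {-h..0} \<inter> closure {0..h}) = {-h..0}"
    and right: "{0..h} \<union> (closure {-h..0} \<inter> closure {0..h}) = {0..h}"
    and union: "{-h..0} \<union> {0..h} = {-h..h}"
    using h by (auto simp: glue)
  have "((\<lambda>t. if t \<in> {-h..0} then 0 else G t) has_derivative
      (if x \<in> {-h..0} then (\<lambda>_. 0) else (*) (G' x))) (at x within {-h..0} \<union> {0..h})"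
  proof (rule has_derivative_If_within_closures[where f' = "\<lambda>_ _. 0" and g' = "\<lambda>t. (*) (G' t)"])
    show "x \<in> {0..h} \<union> (closure {-h..0} \<inter> closure {0..h}) \<Longrightarrow>
        (G has_derivative (*) (G' x)) (at x within {0..h} \<union> (closure {-h..0} \<inter> closure {0..h}))"
      unfolding right using assms(1) by (simp add: has_field_derivative_def)
    show "x \<in> closure {-h..0} \<Longrightarrow> x \<in> closure {0..h} \<Longrightarrow> (\<lambda>_. 0) = (*) (G' x)"
      using glue assms(3) by (auto simp: fun_eq_iff)
  qed (use glue assms(2,4) h in \<open>auto simp: left\<close>)
  moreover have "(if x \<in> {-h..0} then (\<lambda>_. 0) else (*) (G' x)) = (*) (zero_ext G' x)"
    using assms(4) by (auto simp: zero_ext_def)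
  ultimately have "((\<lambda>t. if t \<in> {-h..0} then 0 else G t) has_derivative (*) (zero_ext G' x))
      (at x within {-h..h})"
    by (simp only: union)
  then show ?thesis
    unfolding has_field_derivative_def
    by (rule has_derivative_transform[OF assms(4), rotated]) (simp add: zero_ext_def)
qed

lemma has_integral_abs_le_weighted:
  fixes f k :: "real \<Rightarrow> real" and S :: "real set"
  assumes "(f has_integral J) S" "(k has_integral I) S" "\<And>t. t \<in> S \<Longrightarrow> \<bar>f t\<bar> \<le> B * k t"
  shows "\<bar>J\<bar> \<le> B * I"
proof -
  have "norm (integral S f) \<le> integral S (\<lambda>t. B * k t)"
    using assms by (intro integral_norm_bound_integral has_integral_integrable[OF has_integral_mult_right]) auto
  then show ?thesis
    using integral_unique[OF assms(1)] integral_unique[OF assms(2)] by simp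
qed

lemma kernel_conv_has_derivative:
  fixes F F' :: "real \<Rightarrow> real" and h x \<alpha> :: real
  assumes "0 < \<alpha>" "0 < h" "continuous_on {-h..h} F" "continuous_on {-h..h} F'"
    and "uniformly_differentiable_on {-h..h} F F'" "x \<in> {0..h}"
  shows "(kernel_conv \<alpha> h F has_real_derivative kernel_conv \<alpha> h F' x) (at x within {0..h})"
  unfolding has_field_derivative_def has_derivative_within_alt
proof (intro conjI allI impI bounded_linear_mult_right)
  fix e :: real assume "e > 0"
  let ?k = "\<lambda>s. s powr (\<alpha> - 1)"
  define K where "K = h powr \<alpha> / \<alpha>"
  have kernel: "(?k has_integral K) {0..h}"
    unfolding K_def using assms(1,2) by (intro has_integral_kernel_from_0) auto
  have "K > 0" using assms(1,2) by (simp add: K_def)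
  then obtain d where "d > 0" and d: "\<And>u v. u \<in> {-h..h} \<Longrightarrow> v \<in> {-h..h} \<Longrightarrow> \<bar>v - u\<bar> < d \<Longrightarrow>
      \<bar>F v - F u - F' u * (v - u)\<bar> \<le> e / K * \<bar>v - u\<bar>"
    using assms(5) \<open>e > 0\<close> unfolding uniformly_differentiable_on_def
    by (metis divide_pos_pos)
  show "\<exists>d>0. \<forall>y\<in>{0..h}. norm (y - x) < d \<longrightarrow>
      norm (kernel_conv \<alpha> h F y - kernel_conv \<alpha> h F x - kernel_conv \<alpha> h F' x * (y - x)) \<le> e * norm (y - x)"
  proof (intro exI[of _ d] conjI ballI impI \<open>d > 0\<close>)
    fix y assume y: "y \<in> {0..h}" and "norm (y - x) < d"
    have "((\<lambda>s. ?k s * F (y - s) - ?k s * F (x - s) - ?k s * F' (x - s) * (y - x)) has_integral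
        kernel_conv \<alpha> h F y - kernel_conv \<alpha> h F x - kernel_conv \<alpha> h F' x * (y - x)) {0..h}"
      using assms by (intro has_integral_diff has_integral_mult_left kernel_conv_has_integral y) auto
    moreover have "\<bar>?k s * F (y - s) - ?k s * F (x - s) - ?k s * F' (x - s) * (y - x)\<bar>
        \<le> e / K * \<bar>y - x\<bar> * ?k s" if "s \<in> {0..h}" for s
    proof -
      have "\<bar>F (y - s) - F (x - s) - F' (x - s) * ((y - s) - (x - s))\<bar> \<le> e / K * \<bar>(y - s) - (x - s)\<bar>"
        using that y assms(6) \<open>norm (y - x) < d\<close> by (intro d) auto
      then have "\<bar>F (y - s) - F (x - s) - F' (x - s) * (y - x)\<bar> \<le> e / K * \<bar>y - x\<bar>" by simp
      then have "?k s * \<bar>F (y - s) - F (x - s) - F' (x - s) * (y - x)\<bar> \<le> ?k s * (e / K * \<bar>y - x\<bar>)"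
        by (rule mult_left_mono) simp
      moreover have "?k s * F (y - s) - ?k s * F (x - s) - ?k s * F' (x - s) * (y - x)
          = ?k s * (F (y - s) - F (x - s) - F' (x - s) * (y - x))" by (simp add: algebra_simps)
      ultimately show ?thesis by (simp add: abs_mult mult_ac)
    qed
    ultimately have "\<bar>kernel_conv \<alpha> h F y - kernel_conv \<alpha> h F x - kernel_conv \<alpha> h F' x * (y - x)\<bar>
        \<le> e / K * \<bar>y - x\<bar> * K"
      by (rule has_integral_abs_le_weighted[OF _ kernel])
    then show "norm (kernel_conv \<alpha> h F y - kernel_conv \<alpha> h F x - kernel_conv \<alpha> h F' x * (y - x))
        \<le> e * norm (y - x)"
      using \<open>K > 0\<close> by simp
  qed
qed

lemma integral_reflect_at_0:
  fixes \<psi> :: "real \<Rightarrow> 'a::euclidean_space" and x :: real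
  shows "integral {0..x} (\<lambda>t. \<psi> (x - t)) = integral {0..x} \<psi>"
proof -
  have "integral {0..x} (\<lambda>t. \<psi> (x - t)) = integral {-x..0} (\<lambda>u. \<psi> (- u))"
    using integral_shift_real_ivl[where a = "-x" and b = 0 and c = "-x" and f = "\<lambda>u. \<psi> (- u)"]
    by simp
  also have "\<dots> = integral {0..x} \<psi>"
    using Henstock_Kurzweil_Integration.integral_reflect_real[of x 0 \<psi>] by simp
  finally show ?thesis .
qed

lemma riemann_liouville_eq_kernel_conv:
  fixes f :: "real \<Rightarrow> real" and h x \<alpha> :: real
  assumes "0 < \<alpha>" "continuous_on {0..h} f" "f 0 = 0" "x \<in> {0..h}"
  shows "riemann_liouville \<alpha> f x = kernel_conv \<alpha> h (zero_ext f) x"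
proof -
  let ?\<phi> = "\<lambda>s. s powr (\<alpha> - 1) * zero_ext f (x - s)"
  have "?\<phi> integrable_on {0..h}"
    using assms
    by (intro has_integral_integrable[OF kernel_conv_has_integral] continuous_on_zero_ext) auto
  then have "kernel_conv \<alpha> h (zero_ext f) x = integral {0..x} ?\<phi> + integral {x..h} ?\<phi>"
    unfolding kernel_conv_def using assms(4) by (simp add: Henstock_Kurzweil_Integration.integral_combine)
  also have "integral {x..h} ?\<phi> = 0"
    by (subst integral_cong[where g = "\<lambda>_. 0"]) (auto simp: zero_ext_def)
  also have "integral {0..x} ?\<phi> = integral {0..x} (\<lambda>s. s powr (\<alpha> - 1) * f (x - s))"
    by (rule integral_cong) (auto simp: zero_ext_def assms(3))
  also have "\<dots> = riemann_liouville \<alpha> f x"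
    unfolding riemann_liouville_def by (subst integral_reflect_at_0[symmetric]) simp
  finally show ?thesis by simp
qed

lemma riemann_liouville_has_derivative:
  fixes G G' :: "real \<Rightarrow> real" and h x \<alpha> :: real
  assumes "0 < \<alpha>" "0 < h"
    and "\<And>t. t \<in> {0..h} \<Longrightarrow> (G has_real_derivative G' t) (at t within {0..h})"
    and "continuous_on {0..h} G'" "G 0 = 0" "G' 0 = 0" "x \<in> {0..h}"
  shows "(riemann_liouville \<alpha> G has_real_derivative riemann_liouville \<alpha> G' x) (at x within {0..h})"
proof -
  have "continuous_on {0..h} G" using assms(3) by (rule DERIV_continuous_on)
  have "(kernel_conv \<alpha> h (zero_ext G) has_real_derivative kernel_conv \<alpha> h (zero_ext G') x)
      (at x within {0..h})"
  proof (rule kernel_conv_has_derivative)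
    show "uniformly_differentiable_on {-h..h} (zero_ext G) (zero_ext G')"
      using assms by (intro uniformly_differentiable_on_interval has_real_derivative_zero_ext
          continuous_on_zero_ext)
  qed (use assms \<open>continuous_on {0..h} G\<close> in \<open>auto intro: continuous_on_zero_ext\<close>)
  then have "(riemann_liouville \<alpha> G has_real_derivative kernel_conv \<alpha> h (zero_ext G') x)
      (at x within {0..h})"
    unfolding has_field_derivative_def
    by (rule has_derivative_transform[OF assms(7), rotated])
      (use assms \<open>continuous_on {0..h} G\<close> in \<open>simp add: riemann_liouville_eq_kernel_conv\<close>)
  then show ?thesis
    using assms by (simp add: riemann_liouville_eq_kernel_conv)
qed

lemma abs_integral_kernel_le:
  fixes f :: "real \<Rightarrow> real" and a b \<alpha> B :: real
  assumes "0 < \<alpha>" "a \<le> b" "continuous_on {a..b} f" "\<And>t. t \<in> {a..b} \<Longrightarrow> \<bar>f t\<bar> \<le> B"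
  shows "\<bar>integral {a..b} (\<lambda>t. (b - t) powr (\<alpha> - 1) * f t)\<bar> \<le> B * ((b - a) powr \<alpha> / \<alpha>)"
proof (rule has_integral_abs_le_weighted)
  have "((\<lambda>t. (b - t) powr (\<alpha> - 1)) has_integral ((b - a) powr \<alpha> - (b - b) powr \<alpha>) / \<alpha>) {a..b}"
    using assms(1,2) by (rule has_integral_kernel) simp
  then show kernel: "((\<lambda>t. (b - t) powr (\<alpha> - 1)) has_integral (b - a) powr \<alpha> / \<alpha>) {a..b}"
    by simp
  show "((\<lambda>t. (b - t) powr (\<alpha> - 1) * f t) has_integral integral {a..b} (\<lambda>t. (b - t) powr (\<alpha> - 1) * f t)) {a..b}"
    by (intro integrable_integral integrable_nonneg_kernel_mult[OF kernel] assms(3)) simp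
  fix t assume "t \<in> {a..b}"
  then have "\<bar>f t\<bar> * (b - t) powr (\<alpha> - 1) \<le> B * (b - t) powr (\<alpha> - 1)"
    using assms(4) by (intro mult_right_mono) auto
  then show "\<bar>(b - t) powr (\<alpha> - 1) * f t\<bar> \<le> B * (b - t) powr (\<alpha> - 1)"
    by (simp add: abs_mult mult.commute)
qed

lemma abs_integral_kernel_diff_le:
  fixes f :: "real \<Rightarrow> real" and x y \<alpha> B :: real
  assumes "0 < \<alpha>" "\<alpha> < 1" "0 \<le> x" "x < y" "continuous_on {0..x} f"
    and "\<And>t. t \<in> {0..x} \<Longrightarrow> \<bar>f t\<bar> \<le> B"
  shows "\<bar>integral {0..x} (\<lambda>t. (y - t) powr (\<alpha> - 1) * f t) - integral {0..x} (\<lambda>t. (x - t) powr (\<alpha> - 1) * f t)\<bar>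
    \<le> B * ((x powr \<alpha> - y powr \<alpha> + (y - x) powr \<alpha>) / \<alpha>)"
proof -
  let ?ky = "\<lambda>t. (y - t) powr (\<alpha> - 1)" and ?kx = "\<lambda>t. (x - t) powr (\<alpha> - 1)"
  have Ky: "(?ky has_integral ((y - 0) powr \<alpha> - (y - x) powr \<alpha>) / \<alpha>) {0..x}"
    using assms by (intro has_integral_kernel) auto
  have Kx: "(?kx has_integral ((x - 0) powr \<alpha> - (x - x) powr \<alpha>) / \<alpha>) {0..x}"
    using assms by (intro has_integral_kernel) auto
  have "((\<lambda>t. ?ky t * f t - ?kx t * f t) has_integral
      integral {0..x} (\<lambda>t. ?ky t * f t) - integral {0..x} (\<lambda>t. ?kx t * f t)) {0..x}"
    by (intro has_integral_diff integrable_integral integrable_nonneg_kernel_mult[OF Ky]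
        integrable_nonneg_kernel_mult[OF Kx] assms(5)) auto
  moreover have "((\<lambda>t. ?kx t - ?ky t) has_integral (x powr \<alpha> - y powr \<alpha> + (y - x) powr \<alpha>) / \<alpha>) {0..x}"
    using has_integral_diff[OF Kx Ky] by (simp add: diff_divide_distrib add_divide_distrib diff_diff_eq2 diff_add_eq)
  \<comment> \<open>on the open interval the kernel \<open>?kx\<close> dominates \<open>?ky\<close>; at \<open>t = x\<close> it is \<open>0 powr _ = 0\<close>\<close>
  moreover have "\<bar>?ky t * f t - ?kx t * f t\<bar> \<le> B * (?kx t - ?ky t)" if "t \<in> {0<..<x}" for t
  proof -
    have "?ky t \<le> ?kx t" using that assms by (intro powr_mono2') auto
    moreover have "\<bar>f t\<bar> \<le> B" using that assms(6) by auto
    ultimately have "(?kx t - ?ky t) * \<bar>f t\<bar> \<le> (?kx t - ?ky t) * B"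
      by (intro mult_left_mono) auto
    moreover have "\<bar>?ky t * f t - ?kx t * f t\<bar> = (?kx t - ?ky t) * \<bar>f t\<bar>"
      using \<open>?ky t \<le> ?kx t\<close> by (simp add: abs_mult left_diff_distrib[symmetric])
    ultimately show ?thesis by (simp add: mult.commute)
  qed
  ultimately show ?thesis
    unfolding has_integral_Icc_iff_Ioo by (rule has_integral_abs_le_weighted)
qed

lemma riemann_liouville_holder:
  fixes f :: "real \<Rightarrow> real" and h x y \<alpha> B :: real
  assumes "0 < \<alpha>" "\<alpha> < 1" "continuous_on {0..h} f" "\<And>t. t \<in> {0..h} \<Longrightarrow> \<bar>f t\<bar> \<le> B"
    and "0 \<le> x" "x < y" "y \<le> h"
  shows "\<bar>riemann_liouville \<alpha> f y - riemann_liouville \<alpha> f x\<bar> \<le> 2 * B / \<alpha> * (y - x) powr \<alpha>"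
proof -
  let ?F = "\<lambda>t. (y - t) powr (\<alpha> - 1) * f t"
  have "B \<ge> 0" using assms(4)[of 0] assms(5-7) by force
  have "((\<lambda>t. (y - t) powr (\<alpha> - 1)) has_integral ((y - 0) powr \<alpha> - (y - y) powr \<alpha>) / \<alpha>) {0..y}"
    using assms by (intro has_integral_kernel) auto
  then have "?F integrable_on {0..y}"
    using assms by (intro integrable_nonneg_kernel_mult continuous_on_subset[OF assms(3)]) auto
  then have split: "riemann_liouville \<alpha> f y = integral {0..x} ?F + integral {x..y} ?F"
    unfolding riemann_liouville_def
    using assms(5,6) by (simp add: Henstock_Kurzweil_Integration.integral_combine)
  have near: "\<bar>integral {0..x} ?F - riemann_liouville \<alpha> f x\<bar>
      \<le> B * ((x powr \<alpha> - y powr \<alpha> + (y - x) powr \<alpha>) / \<alpha>)"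
    unfolding riemann_liouville_def
    using assms by (intro abs_integral_kernel_diff_le continuous_on_subset[OF assms(3)]) auto
  have far: "\<bar>integral {x..y} ?F\<bar> \<le> B * ((y - x) powr \<alpha> / \<alpha>)"
    using assms by (intro abs_integral_kernel_le continuous_on_subset[OF assms(3)]) auto
  have "B * (x powr \<alpha> - y powr \<alpha>) \<le> 0"
    using \<open>B \<ge> 0\<close> assms by (intro mult_nonneg_nonpos) (auto intro: powr_mono2)
  moreover have "B * ((x powr \<alpha> - y powr \<alpha> + (y - x) powr \<alpha>) / \<alpha>) + B * ((y - x) powr \<alpha> / \<alpha>)
      = B * (x powr \<alpha> - y powr \<alpha>) / \<alpha> + 2 * B / \<alpha> * (y - x) powr \<alpha>"
    using assms(1) by (simp add: field_simps)
  ultimately have "B * ((x powr \<alpha> - y powr \<alpha> + (y - x) powr \<alpha>) / \<alpha>) + B * ((y - x) powr \<alpha> / \<alpha>)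
      \<le> 2 * B / \<alpha> * (y - x) powr \<alpha>"
    using assms(1) by (simp add: divide_nonpos_pos)
  then show ?thesis
    using split near far by linarith
qed

lemma abs_riemann_liouville_le:
  fixes f :: "real \<Rightarrow> real" and h x \<alpha> B :: real
  assumes "0 < \<alpha>" "continuous_on {0..h} f" "\<And>t. t \<in> {0..h} \<Longrightarrow> \<bar>f t\<bar> \<le> B" "x \<in> {0..h}"
  shows "\<bar>riemann_liouville \<alpha> f x\<bar> \<le> B * (h powr \<alpha> / \<alpha>)"
proof -
  have "\<bar>riemann_liouville \<alpha> f x\<bar> \<le> B * ((x - 0) powr \<alpha> / \<alpha>)"
    unfolding riemann_liouville_def
    using assms by (intro abs_integral_kernel_le continuous_on_subset[OF assms(2)]) auto
  also have "\<dots> \<le> B * (h powr \<alpha> / \<alpha>)"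
    using assms(3)[of x] assms(1,4) by (intro mult_left_mono divide_right_mono powr_mono2) auto
  finally show ?thesis .
qed

lemma holder_imp_continuous_on:
  fixes f :: "real \<Rightarrow> real" and S :: "real set" and K \<gamma> :: real
  assumes "0 < \<gamma>" "0 \<le> K"
    and "\<And>x y. x \<in> S \<Longrightarrow> y \<in> S \<Longrightarrow> x < y \<Longrightarrow> \<bar>f y - f x\<bar> \<le> K * (y - x) powr \<gamma>"
  shows "continuous_on S f"
  unfolding continuous_on_iff
proof (intro ballI allI impI)
  fix x e assume "x \<in> S" "(0::real) < e"
  define d where "d = (e / (K + 1)) powr (1 / \<gamma>)"
  have "d > 0" using \<open>e > 0\<close> assms(2) by (simp add: d_def)
  have d_powr: "d powr \<gamma> = e / (K + 1)" using \<open>e > 0\<close> assms(1,2) by (simp add: d_def powr_powr)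
  show "\<exists>d>0. \<forall>x'\<in>S. dist x' x < d \<longrightarrow> dist (f x') (f x) < e"
  proof (intro exI[of _ d] conjI ballI impI \<open>d > 0\<close>)
    fix x' assume "x' \<in> S" "dist x' x < d"
    have "\<bar>f x' - f x\<bar> \<le> K * \<bar>x' - x\<bar> powr \<gamma>"
      using assms(2) assms(3)[OF \<open>x \<in> S\<close> \<open>x' \<in> S\<close>] assms(3)[OF \<open>x' \<in> S\<close> \<open>x \<in> S\<close>]
      by (cases x x' rule: linorder_cases) (auto simp: abs_minus_commute)
    also have "\<dots> \<le> K * d powr \<gamma>"
      using \<open>dist x' x < d\<close> assms(1,2) by (intro mult_left_mono powr_mono2) (auto simp: dist_real_def)
    also have "\<dots> < e" using \<open>e > 0\<close> assms(2) by (simp add: d_powr field_simps)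
    finally show "dist (f x') (f x) < e" by (simp add: dist_real_def)
  qed
qed

lemma abs_le_SUP_abs:
  fixes f :: "real \<Rightarrow> real" and S :: "real set"
  assumes "compact S" "continuous_on S f" "x \<in> S"
  shows "\<bar>f x\<bar> \<le> (SUP t\<in>S. \<bar>f t\<bar>)"
proof (rule cSUP_upper[OF assms(3)])
  have "bounded ((\<lambda>t. \<bar>f t\<bar>) ` S)"
    using assms(1,2) by (intro compact_imp_bounded compact_continuous_image continuous_intros)
  then show "bdd_above ((\<lambda>t. \<bar>f t\<bar>) ` S)" by (rule bounded_imp_bdd_above)
qed

lemma continuous_on_riemann_liouville:
  fixes f :: "real \<Rightarrow> real" and h \<alpha> :: real
  assumes "0 < \<alpha>" "\<alpha> < 1" "0 \<le> h" "continuous_on {0..h} f"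
  shows "continuous_on {0..h} (riemann_liouville \<alpha> f)"
proof -
  define B where "B = (SUP t\<in>{0..h}. \<bar>f t\<bar>)"
  have B: "\<bar>f t\<bar> \<le> B" if "t \<in> {0..h}" for t
    unfolding B_def using assms(4) that by (intro abs_le_SUP_abs) auto
  have "0 \<le> B" using B[of 0] assms(3) by force
  show ?thesis
  proof (rule holder_imp_continuous_on[where K = "2 * B / \<alpha>" and \<gamma> = \<alpha>])
    fix x y assume "x \<in> {0..h}" "y \<in> {0..h}" "x < y"
    then show "\<bar>riemann_liouville \<alpha> f y - riemann_liouville \<alpha> f x\<bar> \<le> 2 * B / \<alpha> * (y - x) powr \<alpha>"
      using assms B by (intro riemann_liouville_holder) auto
  qed (use assms \<open>0 \<le> B\<close> in auto)
qed

lemma hderiv_hderiv_1: "hderiv j S (hderiv 1 S f) = hderiv (Suc j) S f"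
  by (induction j) simp_all

lemma Ck_norm_0: "Ck_norm 0 h v = (SUP x\<in>{0..h}. \<bar>v x\<bar>)"
  by (simp add: Ck_norm_def)

lemma Ck_norm_le:
  assumes "0 \<le> h" "\<And>j x. j \<le> k \<Longrightarrow> x \<in> {0..h} \<Longrightarrow> \<bar>hderiv j {0..h} v x\<bar> \<le> c"
  shows "Ck_norm k h v \<le> c"
  unfolding Ck_norm_def using assms by (auto intro!: Max.boundedI cSUP_least)

lemma abs_hderiv_le_Ck_norm:
  assumes "j \<le> k" "x \<in> {0..h}" "continuous_on {0..h} (hderiv j {0..h} v)"
  shows "\<bar>hderiv j {0..h} v x\<bar> \<le> Ck_norm k h v"
proof -
  have "\<bar>hderiv j {0..h} v x\<bar> \<le> (SUP t\<in>{0..h}. \<bar>hderiv j {0..h} v t\<bar>)"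
    using assms(2,3) by (intro abs_le_SUP_abs) auto
  also have "\<dots> \<le> Ck_norm k h v"
    unfolding Ck_norm_def using assms(1) by (intro Max_ge) auto
  finally show ?thesis .
qed

lemma holder_quots_le:
  assumes "\<And>x y. 0 \<le> x \<Longrightarrow> x < y \<Longrightarrow> y \<le> h \<Longrightarrow>
      \<bar>hderiv k {0..h} v y - hderiv k {0..h} v x\<bar> \<le> c * (y - x) powr \<gamma>"
    and "q \<in> holder_quots k \<gamma> h v"
  shows "q \<le> c"
  using assms by (auto simp: holder_quots_def abs_minus_commute divide_le_eq)

lemma Ck_has_derivative:
  assumes "Ck k h v" "j < k" "x \<in> {0..h}"
  shows "(hderiv j {0..h} v has_real_derivative hderiv (Suc j) {0..h} v x) (at x within {0..h})"
  using assms unfolding Ck_def by blast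

lemma Ck_continuous_on:
  assumes "Ck k h v" "j \<le> k"
  shows "continuous_on {0..h} (hderiv j {0..h} v)"
  using assms unfolding Ck_def by blast

context
  fixes \<alpha> h :: real and m :: nat and g :: "real \<Rightarrow> real"
  assumes \<alpha>: "0 < \<alpha>" "\<alpha> < 1" and h: "0 < h" and g: "Ck m h g" "\<forall>j\<le>m. hderiv j {0..h} g 0 = 0"
begin

lemma riemann_liouville_hderiv_has_derivative:
  assumes "j < m" "x \<in> {0..h}"
  shows "(riemann_liouville \<alpha> (hderiv j {0..h} g) has_real_derivative
      riemann_liouville \<alpha> (hderiv (Suc j) {0..h} g) x) (at x within {0..h})"
  using assms \<alpha> h g(1) g(2)[rule_format, of j] g(2)[rule_format, of "Suc j"]
  by (intro riemann_liouville_has_derivative Ck_has_derivative Ck_continuous_on) (auto simp del: hderiv.simps)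

lemma hderiv_riemann_liouville:
  assumes "j \<le> m" "x \<in> {0..h}"
  shows "hderiv j {0..h} (riemann_liouville \<alpha> g) x = riemann_liouville \<alpha> (hderiv j {0..h} g) x"
  using assms
proof (induction j arbitrary: x)
  case (Suc j)
  have "hderiv (Suc j) {0..h} (riemann_liouville \<alpha> g) x
      = vector_derivative (riemann_liouville \<alpha> (hderiv j {0..h} g)) (at x within {0..h})"
    using Suc by (auto intro!: vector_derivative_cong_eq always_eventually)
  also have "\<dots> = riemann_liouville \<alpha> (hderiv (Suc j) {0..h} g) x"
    using riemann_liouville_hderiv_has_derivative[of j x] Suc.prems h
      vector_derivative_within_cbox[of 0 h x "riemann_liouville \<alpha> (hderiv j {0..h} g)"]
    by (simp add: has_real_derivative_iff_has_vector_derivative)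
  finally show ?case .
qed simp

lemma Ck_riemann_liouville: "Ck m h (riemann_liouville \<alpha> g)"
  unfolding Ck_def
proof (intro conjI allI impI ballI)
  fix j x assume j: "j < m" and x: "x \<in> {0..h}"
  have "(hderiv j {0..h} (riemann_liouville \<alpha> g) has_real_derivative
      riemann_liouville \<alpha> (hderiv (Suc j) {0..h} g) x) (at x within {0..h})"
    using riemann_liouville_hderiv_has_derivative[OF j x] unfolding has_field_derivative_def
    by (rule has_derivative_transform[OF x, rotated]) (use j in \<open>simp add: hderiv_riemann_liouville\<close>)
  moreover have "hderiv (Suc j) {0..h} (riemann_liouville \<alpha> g) x = riemann_liouville \<alpha> (hderiv (Suc j) {0..h} g) x"
    using j x by (intro hderiv_riemann_liouville) auto
  ultimately show "(hderiv j {0..h} (riemann_liouville \<alpha> g) has_real_derivative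
      hderiv (Suc j) {0..h} (riemann_liouville \<alpha> g) x) (at x within {0..h})"
    by (simp only:)
next
  fix j assume "j \<le> m"
  then have "continuous_on {0..h} (riemann_liouville \<alpha> (hderiv j {0..h} g))"
    using \<alpha> h g(1) by (intro continuous_on_riemann_liouville Ck_continuous_on) auto
  then show "continuous_on {0..h} (hderiv j {0..h} (riemann_liouville \<alpha> g))"
    by (rule continuous_on_eq) (use \<open>j \<le> m\<close> in \<open>simp add: hderiv_riemann_liouville\<close>)
qed

lemma riemann_liouville_top_holder:
  assumes "0 \<le> x" "x < y" "y \<le> h"
  shows "\<bar>hderiv m {0..h} (riemann_liouville \<alpha> g) y - hderiv m {0..h} (riemann_liouville \<alpha> g) x\<bar>
    \<le> 2 / \<alpha> * Ck_norm 0 h (hderiv m {0..h} g) * (y - x) powr \<alpha>"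
proof -
  have "continuous_on {0..h} (hderiv m {0..h} g)" using g(1) by (rule Ck_continuous_on) simp
  then have "\<bar>riemann_liouville \<alpha> (hderiv m {0..h} g) y - riemann_liouville \<alpha> (hderiv m {0..h} g) x\<bar>
      \<le> 2 * Ck_norm 0 h (hderiv m {0..h} g) / \<alpha> * (y - x) powr \<alpha>"
    using \<alpha> assms by (intro riemann_liouville_holder) (auto simp: Ck_norm_0 intro: abs_le_SUP_abs)
  then show ?thesis
    using assms by (simp add: hderiv_riemann_liouville)
qed

lemma cCkg_riemann_liouville: "cCkg m \<alpha> h (riemann_liouville \<alpha> g)"
  unfolding cCkg_def Ckg_def
proof (intro conjI allI impI Ck_riemann_liouville)
  show "bdd_above (holder_quots m \<alpha> h (riemann_liouville \<alpha> g))"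
  proof (rule bdd_aboveI)
    fix q assume "q \<in> holder_quots m \<alpha> h (riemann_liouville \<alpha> g)"
    then show "q \<le> 2 / \<alpha> * Ck_norm 0 h (hderiv m {0..h} g)"
      by (rule holder_quots_le[rotated]) (rule riemann_liouville_top_holder)
  qed
  fix j assume "j \<le> m"
  then show "hderiv j {0..h} (riemann_liouville \<alpha> g) 0 = 0"
    using h by (simp add: hderiv_riemann_liouville riemann_liouville_0)
qed

lemma holder_semi_riemann_liouville:
  "holder_semi 0 \<alpha> h (hderiv m {0..h} (riemann_liouville \<alpha> g)) \<le> 2 / \<alpha> * Ck_norm 0 h (hderiv m {0..h} g)"
  unfolding holder_semi_def
proof (rule cSup_least)
  show "holder_quots 0 \<alpha> h (hderiv m {0..h} (riemann_liouville \<alpha> g)) \<noteq> {}"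
    using h by (auto simp: holder_quots_def)
  fix q assume "q \<in> holder_quots 0 \<alpha> h (hderiv m {0..h} (riemann_liouville \<alpha> g))"
  then show "q \<le> 2 / \<alpha> * Ck_norm 0 h (hderiv m {0..h} g)"
  proof (rule holder_quots_le[rotated])
    fix x y :: real assume "0 \<le> x" "x < y" "y \<le> h"
    then show "\<bar>hderiv 0 {0..h} (hderiv m {0..h} (riemann_liouville \<alpha> g)) y
        - hderiv 0 {0..h} (hderiv m {0..h} (riemann_liouville \<alpha> g)) x\<bar>
        \<le> 2 / \<alpha> * Ck_norm 0 h (hderiv m {0..h} g) * (y - x) powr \<alpha>"
      using riemann_liouville_top_holder by simp
  qed
qed

lemma Ck_norm_riemann_liouville_deriv:
  assumes "1 \<le> m"
  shows "Ck_norm (m - 1) h (hderiv 1 {0..h} (riemann_liouville \<alpha> g))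
    \<le> 2 / \<alpha> * h powr \<alpha> * Ck_norm (m - 1) h (hderiv 1 {0..h} g)"
proof (rule Ck_norm_le)
  let ?N = "Ck_norm (m - 1) h (hderiv 1 {0..h} g)"
  fix j x assume "j \<le> m - 1" "x \<in> {0..h}"
  have "continuous_on {0..h} (hderiv j {0..h} (hderiv 1 {0..h} g))"
    unfolding hderiv_hderiv_1 using \<open>j \<le> m - 1\<close> assms by (intro Ck_continuous_on[OF g(1)]) simp
  then have bound: "\<bar>hderiv (Suc j) {0..h} g t\<bar> \<le> ?N" if "t \<in> {0..h}" for t
    using abs_hderiv_le_Ck_norm[where v = "hderiv 1 {0..h} g", OF \<open>j \<le> m - 1\<close> that]
    by (simp only: hderiv_hderiv_1)
  have "\<bar>hderiv j {0..h} (hderiv 1 {0..h} (riemann_liouville \<alpha> g)) x\<bar>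
      = \<bar>riemann_liouville \<alpha> (hderiv (Suc j) {0..h} g) x\<bar>"
    unfolding hderiv_hderiv_1 using \<open>j \<le> m - 1\<close> \<open>x \<in> {0..h}\<close> assms
    by (subst hderiv_riemann_liouville) auto
  also have "\<dots> \<le> ?N * (h powr \<alpha> / \<alpha>)"
    using \<alpha> \<open>j \<le> m - 1\<close> \<open>x \<in> {0..h}\<close> assms g(1) bound
    by (intro abs_riemann_liouville_le Ck_continuous_on) auto
  also have "\<dots> \<le> 2 / \<alpha> * h powr \<alpha> * ?N"
    using bound[of 0] h \<alpha> by (simp add: field_simps)
  finally show "\<bar>hderiv j {0..h} (hderiv 1 {0..h} (riemann_liouville \<alpha> g)) x\<bar> \<le> 2 / \<alpha> * h powr \<alpha> * ?N" .
qed (use h in simp)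

end

theorem lemma4p4:
  fixes a b M \<alpha> :: real and n :: nat
  assumes "a > 0" "b > 0" "M > 0" "0 < \<alpha>" "\<alpha> < 1" "n > 0" "mexp n \<alpha> \<ge> 1"
  shows "\<exists>C>0. \<forall>h g. 0 < h \<longrightarrow> h \<le> a \<longrightarrow> cCk (mexp n \<alpha>) h g \<longrightarrow>
     (let w = (\<lambda>x. integral {0..x} (\<lambda>t. (x - t) powr (\<alpha> - 1) * g t)) in
        cCkg (mexp n \<alpha>) \<alpha> h w \<and>
        Ck_norm (mexp n \<alpha> - 1) h (hderiv 1 {0..h} w)
          \<le> C * h powr \<alpha> * Ck_norm (mexp n \<alpha> - 1) h (hderiv 1 {0..h} g) \<and>
        holder_semi 0 \<alpha> h (hderiv (mexp n \<alpha>) {0..h} w)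
          \<le> C * Ck_norm 0 h (hderiv (mexp n \<alpha>) {0..h} g))"
proof (intro exI[of _ "2 / \<alpha>"] conjI allI impI)
  show "2 / \<alpha> > 0" using assms(4) by simp
  fix h g assume "0 < h" "h \<le> a" "cCk (mexp n \<alpha>) h g"
  then have "Ck (mexp n \<alpha>) h g" "\<forall>j\<le>mexp n \<alpha>. hderiv j {0..h} g 0 = 0"
    by (simp_all add: cCk_def cCkg_def Ckg_def)
  moreover have "(\<lambda>x. integral {0..x} (\<lambda>t. (x - t) powr (\<alpha> - 1) * g t)) = riemann_liouville \<alpha> g"
    by (simp add: fun_eq_iff riemann_liouville_def)
  ultimately show "let w = (\<lambda>x. integral {0..x} (\<lambda>t. (x - t) powr (\<alpha> - 1) * g t)) in
        cCkg (mexp n \<alpha>) \<alpha> h w \<and>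
        Ck_norm (mexp n \<alpha> - 1) h (hderiv 1 {0..h} w)
          \<le> 2 / \<alpha> * h powr \<alpha> * Ck_norm (mexp n \<alpha> - 1) h (hderiv 1 {0..h} g) \<and>
        holder_semi 0 \<alpha> h (hderiv (mexp n \<alpha>) {0..h} w)
          \<le> 2 / \<alpha> * Ck_norm 0 h (hderiv (mexp n \<alpha>) {0..h} g)"
    using assms(4,5,7) \<open>0 < h\<close>
    by (simp only: Let_def cCkg_riemann_liouville Ck_norm_riemann_liouville_deriv
        holder_semi_riemann_liouville)
qed

end
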